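(* Fix $n\ge0$, a formula $\phi\in\mathcal{L}^1$ and a label $w$. (i) If $\mathtt{Prove_n}(w:\phi)$ returns true, then $w:\phi$ is derivable in $\mathsf{Ldm}_{n}^{1}\mathsf{L}$. (ii) If $\mathtt{Prove_n}(w:\phi)$ returns false, then $w:\phi$ is not derivable in $\mathsf{Ldm}_{n}^{1}\mathsf{L}$.
   Context: Single-agent setting: $Ag=\{1\}$. Formulas $\phi ::= p \mid \overline{p} \mid (\phi\wedge\phi) \mid (\phi\vee\phi) \mid \Box\phi \mid \Diamond\phi \mid [1]\phi \mid \langle 1\rangle\phi$; $\overline{\phi}$ swaps $p/\overline{p}$, $\wedge/\vee$, $\Box/\Diamond$, $[1]/\langle 1\rangle$. A labelled sequent $\mathcal{R},\Gamma$ consists of a multiset $\mathcal{R}$ of relational atoms $\mathcal{R}_1xy$ and a multiset $\Gamma$ of labelled formulas $x:\phi$. Calculus $\mathsf{Ldm}_{n}^{1}\mathsf{L}$ (premise(s) / conclusion; derivations are finite trees with $(\mathsf{id})$ leaves): $(\mathsf{id})$: / $\mathcal{R}, w:p, w:\overline{p},\Gamma$. $(\wedge)$: $\mathcal{R}, w:\phi\wedge\psi, w:\phi,\Gamma$ and $\mathcal{R}, w:\phi\wedge\psi, w:\psi,\Gamma$ / $\mathcal{R}, w:\phi\wedge\psi,\Gamma$. $(\vee)$: $\mathcal{R}, w:\phi\vee\psi, w:\phi, w:\psi,\Gamma$ / $\mathcal{R}, w:\phi\vee\psi,\Gamma$. $(\Box)$: $\mathcal{R}, w:\Box\phi, v:\phi,\Gamma$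 / $\mathcal{R}, w:\Box\phi,\Gamma$ ($v$ fresh). $(\Diamond)$: $\mathcal{R}, w:\Diamond\phi, u:\phi,\Gamma$ / $\mathcal{R}, w:\Diamond\phi,\Gamma$. $(\mathsf{IOA})$: $\mathcal{R},\mathcal{R}_1uv,\Gamma$ / $\mathcal{R},\Gamma$ ($v$ fresh). $([1])$: $\mathcal{R},\mathcal{R}_1wv, w:[1]\phi, v:\phi,\Gamma$ / $\mathcal{R}, w:[1]\phi,\Gamma$ ($v$ fresh). $(\mathsf{Pr}_1)$: $\mathcal{R}, w:\langle 1\rangle\phi, u:\phi,\Gamma$ / $\mathcal{R}, w:\langle 1\rangle\phi,\Gamma$, applicable only if $w=u$ or there are labels $w=z_0,\dots,z_k=u$ ($k\ge1$) with $\mathcal{R}_1z_lz_{l+1}\in\mathcal{R}$ or $\mathcal{R}_1z_{l+1}z_l\in\mathcal{R}$ for each $l<k$. $(\mathsf{APC}^1_n)$ (only if $n>0$): premises $\mathcal{R},\mathcal{R}_1w_kw_j,\Gamma$ for all $0\le k\le n-1$, $k+1\le j\le n$ / $\mathcal{R},\Gamma$. "Fresh" means not occurring in the conclusion. Graphs. $G(\Lambda)$ has the labels of $\Lambda$ as vertices and an edge $(x,y)$ for each $\mathcal{R}_1xy\in\Lambda$. A tree is a graph with a root having exactly one directed path to every other node; a forest is a disjoint union of trees. $\Lambda$ is forestlike iff $G(\Lambda)$ is a forest; its trees are choice-trees; $CT(w)$ is the choice-tree containing $w$. For forestlike $\Lambda$ and label $w$: $w$ is saturated iff (i) $w:\phi\in\Lambda$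 implies $w:\overline{\phi}\notin\Lambda$, (ii) $w:\phi\vee\psi\in\Lambda$ implies $w:\phi,w:\psi\in\Lambda$, (iii) $w:\phi\wedge\psi\in\Lambda$ implies $w:\phi\in\Lambda$ or $w:\psi\in\Lambda$. $w$ is $\Box$-realized iff for each $w:\Box\phi\in\Lambda$ some label $u$ has $u:\phi\in\Lambda$; $[1]$-realized iff for each $w:[1]\phi\in\Lambda$ some $u\in CT(w)$ has $u:\phi\in\Lambda$; $\Diamond$-propagated iff for each $w:\Diamond\phi\in\Lambda$, $u:\phi\in\Lambda$ for all labels $u$; $\langle1\rangle$-propagated iff for each $w:\langle1\rangle\phi\in\Lambda$, $u:\phi\in\Lambda$ for all $u\in CT(w)$. $\Lambda$ is $n$-choice consistent ($n>0$) iff $G(\Lambda)$ has at most $n$ choice-trees. $\Lambda$ is stable iff all labels are saturated, $\Box$- and $[1]$-realized, $\Diamond$- and $\langle1\rangle$-propagated, and (when $n>0$) $\Lambda$ is $n$-choice consistent. Algorithm $\mathtt{Prove_n}(\mathcal{R},\Gamma)$, steps tried in order: 1. If $w:p$ and $w:\overline{p}$ are both present, return true. 2. If the sequent is stable, return false. 3. If some $w$ is not saturated: (i) if $w:\phi\vee\psi$ is present but $w:\phi$ or $w:\psi$ absent, return $\mathtt{Prove_n}(\mathcal{R},w:\phi,w:\psi,\Gamma)$; (ii) if $w:\phi\wedge\psi$ is present but neither $w:\phi$ nor $w:\psi$, return false if $\mathtt{Prove_n}(\mathcal{R},w:\phi,\Gamma)$ or $\mathtt{Prove_n}(\mathcal{R},w:\psi,\Gamma)$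 returns false, else true. 4. If some $w:\langle1\rangle\phi$ is present and some $u\in CT(w)$ has $u:\phi$ absent, return $\mathtt{Prove_n}(\mathcal{R},u:\phi,\Gamma)$. 5. If some $w:\Diamond\phi$ is present and some label $u$ has $u:\phi$ absent, return $\mathtt{Prove_n}(\mathcal{R},u:\phi,\Gamma)$. 6. If some $w:[1]\phi$ is present with $u:\phi$ absent for all $u\in CT(w)$, return $\mathtt{Prove_n}(\mathcal{R},\mathcal{R}_1wv,v:\phi,\Gamma)$, $v$ fresh. 7. If some $w:\Box\phi$ is present with $u:\phi$ absent for all labels $u$, return $\mathtt{Prove_n}(\mathcal{R},v:\phi,\Gamma)$, $v$ fresh. 8. (Only when $n>0$.) If not $n$-choice consistent, pick distinct choice-tree roots $w_0,\dots,w_n$ and return false if $\mathtt{Prove_n}(\mathcal{R},\mathcal{R}_1w_kw_j,\Gamma)$ returns false for some $0\le k\le n-1$, $k+1\le j\le n$, else true. For $n=0$ step 8 is absent and stability omits $n$-choice consistency. *)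

theory Defs
  imports Main "HOL-Library.Multiset"
begin

datatype fm =
    Atom nat
  | NAtom nat
  | And fm fm
  | Or fm fm
  | Box fm
  | Dia fm
  | Stit fm
  | DStit fm

primrec dual :: "fm \<Rightarrow> fm" where
  "dual (Atom p) = NAtom p"
| "dual (NAtom p) = Atom p"
| "dual (And a b) = Or (dual a) (dual b)"
| "dual (Or a b) = And (dual a) (dual b)"
| "dual (Box a) = Dia (dual a)"
| "dual (Dia a) = Box (dual a)"
| "dual (Stit a) = DStit (dual a)"
| "dual (DStit a) = Stit (dual a)"

type_synonym label = nat
type_synonym rels = "(label \<times> label) multiset"   (* atoms R_1 x y as (x,y) *)
type_synonym lfms = "(label \<times> fm) multiset"

definition labels :: "rels \<Rightarrow> lfms \<Rightarrow> label set" where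
  "labels R G = fst ` set_mset R \<union> snd ` set_mset R \<union> fst ` set_mset G"

definition fresh :: "label \<Rightarrow> rels \<Rightarrow> lfms \<Rightarrow> bool" where
  "fresh v R G \<longleftrightarrow> v \<notin> labels R G"

definition conn :: "rels \<Rightarrow> label \<Rightarrow> label \<Rightarrow> bool" where
  "conn R = (\<lambda>x y. (x, y) \<in># R \<or> (y, x) \<in># R)\<^sup>*\<^sup>*"

inductive deriv :: "nat \<Rightarrow> rels \<Rightarrow> lfms \<Rightarrow> bool" for n :: nat where
  ax_id: "\<lbrakk>(w, Atom p) \<in># G; (w, NAtom p) \<in># G\<rbrakk> \<Longrightarrow> deriv n R G"
| r_and: "\<lbrakk>(w, And a b) \<in># G; deriv n R (add_mset (w, a) G); deriv n R (add_mset (w, b) G)\<rbrakk>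
          \<Longrightarrow> deriv n R G"
| r_or: "\<lbrakk>(w, Or a b) \<in># G; deriv n R (add_mset (w, a) (add_mset (w, b) G))\<rbrakk> \<Longrightarrow> deriv n R G"
| r_box: "\<lbrakk>(w, Box a) \<in># G; fresh v R G; deriv n R (add_mset (v, a) G)\<rbrakk> \<Longrightarrow> deriv n R G"
| r_dia: "\<lbrakk>(w, Dia a) \<in># G; deriv n R (add_mset (u, a) G)\<rbrakk> \<Longrightarrow> deriv n R G"
| r_ioa: "\<lbrakk>fresh v R G; deriv n (add_mset (u, v) R) G\<rbrakk> \<Longrightarrow> deriv n R G"
| r_stit: "\<lbrakk>(w, Stit a) \<in># G; fresh v R G; deriv n (add_mset (w, v) R) (add_mset (v, a) G)\<rbrakk>
           \<Longrightarrow> deriv n R G"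
| r_pr: "\<lbrakk>(w, DStit a) \<in># G; conn R w u; deriv n R (add_mset (u, a) G)\<rbrakk> \<Longrightarrow> deriv n R G"
| r_apc: "\<lbrakk>0 < n; \<forall>k j. k < j \<and> j \<le> n \<longrightarrow> deriv n (add_mset (ws k, ws j) R) G\<rbrakk>
          \<Longrightarrow> deriv n R G"

definition dpath :: "rels \<Rightarrow> label \<Rightarrow> label list \<Rightarrow> label \<Rightarrow> bool" where
  "dpath R x p y \<longleftrightarrow> p \<noteq> [] \<and> hd p = x \<and> last p = y \<and>
     (\<forall>i. Suc i < length p \<longrightarrow> (p ! i, p ! Suc i) \<in># R)"

text \<open>The weakly connected component of w; for forestlike sequents this is CT(w).\<close>
definition CT :: "rels \<Rightarrow> lfms \<Rightarrow> label \<Rightarrow> label set" where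
  "CT R G w = {u \<in> labels R G. conn R w u}"

definition is_root :: "rels \<Rightarrow> lfms \<Rightarrow> label \<Rightarrow> bool" where
  "is_root R G r \<longleftrightarrow> r \<in> labels R G \<and> (\<forall>v \<in> CT R G r. \<exists>!p. dpath R r p v)"

definition forestlike :: "rels \<Rightarrow> lfms \<Rightarrow> bool" where
  "forestlike R G \<longleftrightarrow> (\<forall>w \<in> labels R G. \<exists>r \<in> CT R G w. is_root R G r)"

definition choice_trees :: "rels \<Rightarrow> lfms \<Rightarrow> label set set" where
  "choice_trees R G = CT R G ` labels R G"

definition choice_consistent :: "nat \<Rightarrow> rels \<Rightarrow> lfms \<Rightarrow> bool" where
  "choice_consistent n R G \<longleftrightarrow> card (choice_trees R G) \<le> n"

definition saturated :: "rels \<Rightarrow> lfms \<Rightarrow> label \<Rightarrow> bool" where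
  "saturated R G w \<longleftrightarrow>
     (\<forall>a. (w, a) \<in># G \<longrightarrow> (w, dual a) \<notin># G) \<and>
     (\<forall>a b. (w, Or a b) \<in># G \<longrightarrow> (w, a) \<in># G \<and> (w, b) \<in># G) \<and>
     (\<forall>a b. (w, And a b) \<in># G \<longrightarrow> (w, a) \<in># G \<or> (w, b) \<in># G)"

definition box_realized :: "rels \<Rightarrow> lfms \<Rightarrow> label \<Rightarrow> bool" where
  "box_realized R G w \<longleftrightarrow> (\<forall>a. (w, Box a) \<in># G \<longrightarrow> (\<exists>u. (u, a) \<in># G))"

definition stit_realized :: "rels \<Rightarrow> lfms \<Rightarrow> label \<Rightarrow> bool" where
  "stit_realized R G w \<longleftrightarrow> (\<forall>a. (w, Stit a) \<in># G \<longrightarrow> (\<exists>u \<in> CT R G w. (u, a) \<in># G))"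

definition dia_propagated :: "rels \<Rightarrow> lfms \<Rightarrow> label \<Rightarrow> bool" where
  "dia_propagated R G w \<longleftrightarrow> (\<forall>a. (w, Dia a) \<in># G \<longrightarrow> (\<forall>u \<in> labels R G. (u, a) \<in># G))"

definition dstit_propagated :: "rels \<Rightarrow> lfms \<Rightarrow> label \<Rightarrow> bool" where
  "dstit_propagated R G w \<longleftrightarrow> (\<forall>a. (w, DStit a) \<in># G \<longrightarrow> (\<forall>u \<in> CT R G w. (u, a) \<in># G))"

definition stable :: "nat \<Rightarrow> rels \<Rightarrow> lfms \<Rightarrow> bool" where
  "stable n R G \<longleftrightarrow> forestlike R G \<and>
     (\<forall>w \<in> labels R G. saturated R G w \<and> box_realized R G w \<and> stit_realized R G w \<and>
                       dia_propagated R G w \<and> dstit_propagated R G w) \<and>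
     (0 < n \<longrightarrow> choice_consistent n R G)"

definition c1 :: "rels \<Rightarrow> lfms \<Rightarrow> bool" where
  "c1 R G \<longleftrightarrow> (\<exists>w p. (w, Atom p) \<in># G \<and> (w, NAtom p) \<in># G)"
definition c3i :: "rels \<Rightarrow> lfms \<Rightarrow> bool" where
  "c3i R G \<longleftrightarrow> (\<exists>w a b. (w, Or a b) \<in># G \<and> ((w, a) \<notin># G \<or> (w, b) \<notin># G))"
definition c3ii :: "rels \<Rightarrow> lfms \<Rightarrow> bool" where
  "c3ii R G \<longleftrightarrow> (\<exists>w a b. (w, And a b) \<in># G \<and> (w, a) \<notin># G \<and> (w, b) \<notin># G)"
definition c4 :: "rels \<Rightarrow> lfms \<Rightarrow> bool" where
  "c4 R G \<longleftrightarrow> (\<exists>w a. (w, DStit a) \<in># G \<and> (\<exists>u \<in> CT R G w. (u, a) \<notin># G))"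
definition c5 :: "rels \<Rightarrow> lfms \<Rightarrow> bool" where
  "c5 R G \<longleftrightarrow> (\<exists>w a. (w, Dia a) \<in># G \<and> (\<exists>u \<in> labels R G. (u, a) \<notin># G))"
definition c6 :: "rels \<Rightarrow> lfms \<Rightarrow> bool" where
  "c6 R G \<longleftrightarrow> (\<exists>w a. (w, Stit a) \<in># G \<and> (\<forall>u \<in> CT R G w. (u, a) \<notin># G))"
definition c7 :: "rels \<Rightarrow> lfms \<Rightarrow> bool" where
  "c7 R G \<longleftrightarrow> (\<exists>w a. (w, Box a) \<in># G \<and> (\<forall>u \<in> labels R G. (u, a) \<notin># G))"

text \<open>prove n R G b: some execution of Prove_n(R, G) (over all admissible choices of
  instances and fresh labels) terminates with result b.\<close>
inductive prove :: "nat \<Rightarrow> rels \<Rightarrow> lfms \<Rightarrow> bool \<Rightarrow> bool" for n :: nat where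
  step1: "c1 R G \<Longrightarrow> prove n R G True"
| step2: "\<lbrakk>\<not> c1 R G; stable n R G\<rbrakk> \<Longrightarrow> prove n R G False"
| step3i: "\<lbrakk>\<not> c1 R G; \<not> stable n R G;
            (w, Or a b) \<in># G; (w, a) \<notin># G \<or> (w, b) \<notin># G;
            prove n R (add_mset (w, a) (add_mset (w, b) G)) r\<rbrakk>
           \<Longrightarrow> prove n R G r"
| step3ii: "\<lbrakk>\<not> c1 R G; \<not> stable n R G; \<not> c3i R G;
             (w, And a b) \<in># G; (w, a) \<notin># G; (w, b) \<notin># G;
             prove n R (add_mset (w, a) G) r1; prove n R (add_mset (w, b) G) r2\<rbrakk>
            \<Longrightarrow> prove n R G (r1 \<and> r2)"
| step4: "\<lbrakk>\<not> c1 R G; \<not> stable n R G; \<not> c3i R G; \<not> c3ii R G;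
           (w, DStit a) \<in># G; u \<in> CT R G w; (u, a) \<notin># G;
           prove n R (add_mset (u, a) G) r\<rbrakk>
          \<Longrightarrow> prove n R G r"
| step5: "\<lbrakk>\<not> c1 R G; \<not> stable n R G; \<not> c3i R G; \<not> c3ii R G; \<not> c4 R G;
           (w, Dia a) \<in># G; u \<in> labels R G; (u, a) \<notin># G;
           prove n R (add_mset (u, a) G) r\<rbrakk>
          \<Longrightarrow> prove n R G r"
| step6: "\<lbrakk>\<not> c1 R G; \<not> stable n R G; \<not> c3i R G; \<not> c3ii R G; \<not> c4 R G; \<not> c5 R G;
           (w, Stit a) \<in># G; \<forall>u \<in> CT R G w. (u, a) \<notin># G; fresh v R G;
           prove n (add_mset (w, v) R) (add_mset (v, a) G) r\<rbrakk>
          \<Longrightarrow> prove n R G r"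
| step7: "\<lbrakk>\<not> c1 R G; \<not> stable n R G; \<not> c3i R G; \<not> c3ii R G; \<not> c4 R G; \<not> c5 R G;
           \<not> c6 R G;
           (w, Box a) \<in># G; \<forall>u \<in> labels R G. (u, a) \<notin># G; fresh v R G;
           prove n R (add_mset (v, a) G) r\<rbrakk>
          \<Longrightarrow> prove n R G r"
| step8: "\<lbrakk>0 < n; \<not> c1 R G; \<not> stable n R G; \<not> c3i R G; \<not> c3ii R G; \<not> c4 R G; \<not> c5 R G;
           \<not> c6 R G; \<not> c7 R G;
           \<not> choice_consistent n R G;
           inj_on ws {..n}; \<forall>i \<le> n. is_root R G (ws i);
           \<forall>k j. k < j \<and> j \<le> n \<longrightarrow> prove n (add_mset (ws k, ws j) R) G (res k j)\<rbrakk>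
          \<Longrightarrow> prove n R G (\<forall>k j. k < j \<and> j \<le> n \<longrightarrow> res k j)"

end

theory Submission
  imports Defs
begin

text \<open>
  Every step of \<open>Prove\<^sub>n\<close> that passes a result upwards is an instance of a rule of
  the calculus, so a run returning true is a derivation read bottom-up. A run returning false
  ends in a stable sequent without an axiom that contains \<open>w:\<phi>\<close>. Its labels form a
  countermodel: two labels share a choice cell iff they are connected in the graph of the
  sequent, \<open>n\<close>-choice consistency bounds the number of cells by \<open>n\<close>, and \<open>p\<close> is false exactly
  where \<open>NAtom p\<close> occurs. Stability makes every labelled formula of the sequent false at its
  label, and the calculus is sound for such models, so \<open>w:\<phi>\<close> is not derivable.
\<close>

lemma prove_True_deriv: "prove n R G r \<Longrightarrow> r \<Longrightarrow> deriv n R G"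
proof (induction rule: prove.induct)
  case (step8 R G ws res)
  then show ?case by (intro deriv.r_apc[of n ws]) auto
qed (auto intro: deriv.intros simp: c1_def CT_def)

lemma prove_False_stable:
  "prove n R G r \<Longrightarrow> \<not> r \<Longrightarrow> q \<in># G \<Longrightarrow> \<exists>R' G'. q \<in># G' \<and> stable n R' G' \<and> \<not> c1 R' G'"
  by (induction rule: prove.induct) auto

text \<open>
  Models of the logic: \<open>W\<close> is the moment, the equivalence classes of \<open>E\<close> are the
  choice cells of the agent; \<open>Box\<close> ranges over the moment, \<open>Stit\<close> over the current cell.
\<close>

primrec sat :: "'w set \<Rightarrow> ('w \<Rightarrow> 'w \<Rightarrow> bool) \<Rightarrow> (nat \<Rightarrow> 'w \<Rightarrow> bool) \<Rightarrow> 'w \<Rightarrow> fm \<Rightarrow> bool" where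
  "sat W E V x (Atom p) = V p x"
| "sat W E V x (NAtom p) = (\<not> V p x)"
| "sat W E V x (And a b) = (sat W E V x a \<and> sat W E V x b)"
| "sat W E V x (Or a b) = (sat W E V x a \<or> sat W E V x b)"
| "sat W E V x (Box a) = (\<forall>y\<in>W. sat W E V y a)"
| "sat W E V x (Dia a) = (\<exists>y\<in>W. sat W E V y a)"
| "sat W E V x (Stit a) = (\<forall>y\<in>W. E x y \<longrightarrow> sat W E V y a)"
| "sat W E V x (DStit a) = (\<exists>y\<in>W. E x y \<and> sat W E V y a)"

text \<open>At most \<open>n\<close> choice cells, as imposed by \<open>APC\<^sub>n\<close>; no bound for \<open>n = 0\<close>.\<close>

definition bounded_choices :: "nat \<Rightarrow> 'w set \<Rightarrow> ('w \<Rightarrow> 'w \<Rightarrow> bool) \<Rightarrow> bool" where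
  "bounded_choices n W E \<longleftrightarrow>
     0 < n \<longrightarrow> (\<forall>f. (\<forall>i\<le>n. f i \<in> W) \<longrightarrow> (\<exists>k j. k < j \<and> j \<le> n \<and> E (f k) (f j)))"

definition rels_hold :: "('w \<Rightarrow> 'w \<Rightarrow> bool) \<Rightarrow> (label \<Rightarrow> 'w) \<Rightarrow> rels \<Rightarrow> bool" where
  "rels_hold E I R \<longleftrightarrow> (\<forall>p \<in># R. E (I (fst p)) (I (snd p)))"

definition seq_holds :: "'w set \<Rightarrow> ('w \<Rightarrow> 'w \<Rightarrow> bool) \<Rightarrow> (nat \<Rightarrow> 'w \<Rightarrow> bool) \<Rightarrow> (label \<Rightarrow> 'w) \<Rightarrow> lfms \<Rightarrow> bool" where
  "seq_holds W E V I G \<longleftrightarrow> (\<exists>q \<in># G. sat W E V (I (fst q)) (snd q))"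

definition seq_valid :: "'w set \<Rightarrow> ('w \<Rightarrow> 'w \<Rightarrow> bool) \<Rightarrow> (nat \<Rightarrow> 'w \<Rightarrow> bool) \<Rightarrow> rels \<Rightarrow> lfms \<Rightarrow> bool" where
  "seq_valid W E V R G \<longleftrightarrow> (\<forall>I. range I \<subseteq> W \<longrightarrow> rels_hold E I R \<longrightarrow> seq_holds W E V I G)"

lemma rels_hold_add_mset [simp]:
  "rels_hold E I (add_mset (x, y) R) \<longleftrightarrow> E (I x) (I y) \<and> rels_hold E I R"
  by (auto simp: rels_hold_def)

lemma seq_holds_add_mset [simp]:
  "seq_holds W E V I (add_mset (x, a) G) \<longleftrightarrow> sat W E V (I x) a \<or> seq_holds W E V I G"
  by (auto simp: seq_holds_def)

lemma seq_holdsI: "(x, a) \<in># G \<Longrightarrow> sat W E V (I x) a \<Longrightarrow> seq_holds W E V I G"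
  unfolding seq_holds_def by (metis fst_conv snd_conv)

lemma seq_validD:
  "seq_valid W E V R G \<Longrightarrow> range I \<subseteq> W \<Longrightarrow> rels_hold E I R \<Longrightarrow> seq_holds W E V I G"
  unfolding seq_valid_def by blast

lemma seq_valid_principal:
  assumes "(w, c) \<in># G"
    and "\<And>I. range I \<subseteq> W \<Longrightarrow> rels_hold E I R \<Longrightarrow> \<not> seq_holds W E V I G \<Longrightarrow> sat W E V (I w) c"
  shows "seq_valid W E V R G"
  using assms(2) seq_holdsI[OF assms(1)] unfolding seq_valid_def by blast

lemma rels_hold_fun_upd_fresh:
  assumes "fresh v R G"
  shows "rels_hold E (I(v := y)) R \<longleftrightarrow> rels_hold E I R"
proof -
  have "fst p \<noteq> v" "snd p \<noteq> v" if "p \<in># R" for p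
    using assms that unfolding fresh_def labels_def by force+
  then show ?thesis unfolding rels_hold_def by auto
qed

lemma seq_holds_fun_upd_fresh:
  assumes "fresh v R G"
  shows "seq_holds W E V (I(v := y)) G \<longleftrightarrow> seq_holds W E V I G"
proof -
  have "fst q \<noteq> v" if "q \<in># G" for q
    using assms that unfolding fresh_def labels_def by force
  then show ?thesis unfolding seq_holds_def by auto
qed

lemma rels_hold_conn:
  assumes "conn R x y" "rels_hold E I R" "equivp E"
  shows "E (I x) (I y)"
  using assms(1) unfolding conn_def
proof (induction rule: rtranclp_induct)
  case base
  then show ?case using assms(3) by (simp add: equivp_reflp)
next
  case (step y z)
  then have "E (I y) (I z)"
    using assms(2,3) by (auto simp: rels_hold_def equivp_symp)
  then show ?case using step.IH assms(3) by (meson equivp_transp)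
qed

lemma ax_id_sound:
  assumes "(w, Atom p) \<in># G" "(w, NAtom p) \<in># G"
  shows "seq_valid W E V R G"
proof (rule seq_valid_principal[OF assms(1)])
  fix I assume "\<not> seq_holds W E V I G"
  then show "sat W E V (I w) (Atom p)"
    using seq_holdsI[OF assms(2), of W E V I] by auto
qed

lemma r_and_sound:
  assumes "(w, And a b) \<in># G"
    and "seq_valid W E V R (add_mset (w, a) G)" "seq_valid W E V R (add_mset (w, b) G)"
  shows "seq_valid W E V R G"
proof (rule seq_valid_principal[OF assms(1)])
  fix I assume I: "range I \<subseteq> W" "rels_hold E I R" and G_false: "\<not> seq_holds W E V I G"
  show "sat W E V (I w) (And a b)"
    using seq_validD[OF assms(2) I] seq_validD[OF assms(3) I] G_false by simp
qed

lemma r_or_sound: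
  assumes "(w, Or a b) \<in># G" "seq_valid W E V R (add_mset (w, a) (add_mset (w, b) G))"
  shows "seq_valid W E V R G"
proof (rule seq_valid_principal[OF assms(1)])
  fix I assume I: "range I \<subseteq> W" "rels_hold E I R" and G_false: "\<not> seq_holds W E V I G"
  show "sat W E V (I w) (Or a b)"
    using seq_validD[OF assms(2) I] G_false by simp
qed

lemma r_dia_sound:
  assumes "(w, Dia a) \<in># G" "seq_valid W E V R (add_mset (u, a) G)"
  shows "seq_valid W E V R G"
proof (rule seq_valid_principal[OF assms(1)])
  fix I assume I: "range I \<subseteq> W" "rels_hold E I R" and G_false: "\<not> seq_holds W E V I G"
  show "sat W E V (I w) (Dia a)"
    using seq_validD[OF assms(2) I] G_false I(1) by auto
qed

lemma r_pr_sound: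
  assumes "equivp E" "(w, DStit a) \<in># G" "conn R w u" "seq_valid W E V R (add_mset (u, a) G)"
  shows "seq_valid W E V R G"
proof (rule seq_valid_principal[OF assms(2)])
  fix I assume I: "range I \<subseteq> W" "rels_hold E I R" and G_false: "\<not> seq_holds W E V I G"
  show "sat W E V (I w) (DStit a)"
    using seq_validD[OF assms(4) I] G_false I(1) rels_hold_conn[OF assms(3) I(2) assms(1)] by auto
qed

lemma r_box_sound:
  assumes "(w, Box a) \<in># G" "fresh v R G" "seq_valid W E V R (add_mset (v, a) G)"
  shows "seq_valid W E V R G"
  unfolding seq_valid_def
proof (intro allI impI)
  fix I assume I: "range I \<subseteq> W" "rels_hold E I R"
  show "seq_holds W E V I G"
  proof (rule ccontr)
    assume G_false: "\<not> seq_holds W E V I G"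
    then have "\<not> sat W E V (I w) (Box a)"
      using seq_holdsI[OF assms(1)] by blast
    then obtain y where "y \<in> W" "\<not> sat W E V y a"
      by auto
    have "\<not> seq_holds W E V (I(v := y)) (add_mset (v, a) G)"
      using G_false \<open>\<not> sat W E V y a\<close> by (simp add: seq_holds_fun_upd_fresh[OF assms(2)])
    moreover have "range (I(v := y)) \<subseteq> W" "rels_hold E (I(v := y)) R"
      using I \<open>y \<in> W\<close> by (auto simp: rels_hold_fun_upd_fresh[OF assms(2)])
    ultimately show False using assms(3) unfolding seq_valid_def by blast
  qed
qed

lemma r_stit_sound:
  assumes "(w, Stit a) \<in># G" "fresh v R G" "seq_valid W E V (add_mset (w, v) R) (add_mset (v, a) G)"
  shows "seq_valid W E V R G"
  unfolding seq_valid_def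
proof (intro allI impI)
  fix I assume I: "range I \<subseteq> W" "rels_hold E I R"
  show "seq_holds W E V I G"
  proof (rule ccontr)
    assume G_false: "\<not> seq_holds W E V I G"
    then have "\<not> sat W E V (I w) (Stit a)"
      using seq_holdsI[OF assms(1)] by blast
    then obtain y where "y \<in> W" "E (I w) y" "\<not> sat W E V y a"
      by auto
    have "w \<noteq> v"
      using assms(1,2) unfolding fresh_def labels_def by force
    have "\<not> seq_holds W E V (I(v := y)) (add_mset (v, a) G)"
      using G_false \<open>\<not> sat W E V y a\<close> by (simp add: seq_holds_fun_upd_fresh[OF assms(2)])
    moreover have "range (I(v := y)) \<subseteq> W" "rels_hold E (I(v := y)) (add_mset (w, v) R)"
      using I \<open>y \<in> W\<close> \<open>E (I w) y\<close> \<open>w \<noteq> v\<close> by (auto simp: rels_hold_fun_upd_fresh[OF assms(2)])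
    ultimately show False using assms(3) unfolding seq_valid_def by blast
  qed
qed

lemma r_ioa_sound:
  assumes "equivp E" "fresh v R G" "seq_valid W E V (add_mset (u, v) R) G"
  shows "seq_valid W E V R G"
  unfolding seq_valid_def
proof (intro allI impI)
  fix I assume I: "range I \<subseteq> W" "rels_hold E I R"
  have "range (I(v := I u)) \<subseteq> W" using I by auto
  moreover have "rels_hold E (I(v := I u)) (add_mset (u, v) R)"
    using I assms(1) by (simp add: rels_hold_fun_upd_fresh[OF assms(2)] equivp_reflp)
  ultimately show "seq_holds W E V I G"
    using assms(3) unfolding seq_valid_def by (metis seq_holds_fun_upd_fresh[OF assms(2)])
qed

lemma r_apc_sound:
  assumes "bounded_choices n W E" "0 < n"
    and "\<forall>k j. k < j \<and> j \<le> n \<longrightarrow> seq_valid W E V (add_mset (ws k, ws j) R) G"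
  shows "seq_valid W E V R G"
  unfolding seq_valid_def
proof (intro allI impI)
  fix I assume I: "range I \<subseteq> W" "rels_hold E I R"
  then have "\<forall>i\<le>n. I (ws i) \<in> W" by auto
  then obtain k j where "k < j" "j \<le> n" "E (I (ws k)) (I (ws j))"
    using assms(1,2) unfolding bounded_choices_def by (auto dest!: spec[of _ "\<lambda>i. I (ws i)"])
  then show "seq_holds W E V I G"
    using assms(3) I unfolding seq_valid_def by simp
qed

theorem deriv_valid:
  assumes "deriv n R G" "equivp E" "bounded_choices n W E"
  shows "seq_valid W E V R G"
  using assms(1)
proof (induction rule: deriv.induct)
  case (ax_id w p G R)
  then show ?case by (rule ax_id_sound)
next
  case (r_and w a b G R)
  show ?case using r_and.hyps(1) r_and.IH by (rule r_and_sound)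
next
  case (r_or w a b G R)
  show ?case using r_or.hyps(1) r_or.IH by (rule r_or_sound)
next
  case (r_box w a G v R)
  show ?case using r_box.hyps(1,2) r_box.IH by (rule r_box_sound)
next
  case (r_dia w a G R u)
  show ?case using r_dia.hyps(1) r_dia.IH by (rule r_dia_sound)
next
  case (r_ioa v R G u)
  show ?case using assms(2) r_ioa.hyps(1) r_ioa.IH by (rule r_ioa_sound)
next
  case (r_stit w a G v R)
  show ?case using r_stit.hyps(1,2) r_stit.IH by (rule r_stit_sound)
next
  case (r_pr w a G R u)
  show ?case using assms(2) r_pr.hyps(1,2) r_pr.IH by (rule r_pr_sound)
next
  case (r_apc ws R G)
  show ?case using assms(3) r_apc.hyps(1) by (rule r_apc_sound[where ws = ws]) (use r_apc.IH in blast)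
qed

lemma equivp_conn: "equivp (conn R)"
  unfolding conn_def by (rule equivp_rtranclp) (auto intro: sympI)

lemma label_in_labels: "(x, a) \<in># G \<Longrightarrow> x \<in> labels R G"
  unfolding labels_def by force

lemma stable_labelD:
  assumes "stable n R G" "(x, a) \<in># G"
  shows "saturated R G x" "box_realized R G x" "stit_realized R G x"
    and "dia_propagated R G x" "dstit_propagated R G x"
  using assms label_in_labels unfolding stable_def by blast+

lemma stable_sat_false:
  assumes "stable n R G" "\<not> c1 R G"
  shows "(x, a) \<in># G \<Longrightarrow> \<not> sat (labels R G) (conn R) (\<lambda>p y. (y, NAtom p) \<in># G) x a"
proof (induction a arbitrary: x)
  case (Atom p)
  then show ?case using assms(2) unfolding c1_def by auto
next
  case (NAtom p)
  then show ?case by simp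
next
  case (And a b)
  have "(x, a) \<in># G \<or> (x, b) \<in># G"
    using stable_labelD(1)[OF assms(1) And.prems] And.prems unfolding saturated_def by blast
  then show ?case using And.IH by auto
next
  case (Or a b)
  have "(x, a) \<in># G" "(x, b) \<in># G"
    using stable_labelD(1)[OF assms(1) Or.prems] Or.prems unfolding saturated_def by blast+
  then show ?case using Or.IH by auto
next
  case (Box a)
  obtain u where "(u, a) \<in># G"
    using stable_labelD(2)[OF assms(1) Box.prems] Box.prems unfolding box_realized_def by blast
  then show ?case using Box.IH label_in_labels by fastforce
next
  case (Dia a)
  have "\<forall>u \<in> labels R G. (u, a) \<in># G"
    using stable_labelD(4)[OF assms(1) Dia.prems] Dia.prems unfolding dia_propagated_def by blast
  then show ?case using Dia.IH by auto
next
  case (Stit a)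
  obtain u where "u \<in> CT R G x" "(u, a) \<in># G"
    using stable_labelD(3)[OF assms(1) Stit.prems] Stit.prems unfolding stit_realized_def by blast
  then show ?case using Stit.IH unfolding CT_def by auto
next
  case (DStit a)
  have "\<forall>u \<in> CT R G x. (u, a) \<in># G"
    using stable_labelD(5)[OF assms(1) DStit.prems] DStit.prems unfolding dstit_propagated_def by blast
  then show ?case using DStit.IH unfolding CT_def by auto
qed

lemma stable_bounded_choices:
  assumes "stable n R G"
  shows "bounded_choices n (labels R G) (conn R)"
  unfolding bounded_choices_def
proof (intro impI allI)
  assume "0 < n"
  fix f assume f: "\<forall>i\<le>n. f i \<in> labels R G"
  have "(\<lambda>i. CT R G (f i)) ` {..n} \<subseteq> choice_trees R G"
    using f unfolding choice_trees_def by auto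
  moreover have "finite (choice_trees R G)"
    unfolding choice_trees_def labels_def by simp
  moreover have "card (choice_trees R G) \<le> n"
    using assms \<open>0 < n\<close> unfolding stable_def choice_consistent_def by blast
  ultimately have "card ((\<lambda>i. CT R G (f i)) ` {..n}) < card {..n}"
    by (metis card_atMost card_mono le_imp_less_Suc order.trans)
  then have "\<not> inj_on (\<lambda>i. CT R G (f i)) {..n}"
    by (rule pigeonhole)
  then obtain k j where "k < j" "j \<le> n" "CT R G (f k) = CT R G (f j)"
    unfolding inj_on_def by (metis atMost_iff linorder_neqE_nat order.strict_implies_order order.strict_trans2)
  moreover have "f j \<in> CT R G (f j)"
    using f \<open>j \<le> n\<close> equivp_conn unfolding CT_def by (simp add: equivp_reflp)
  ultimately show "\<exists>k j. k < j \<and> j \<le> n \<and> conn R (f k) (f j)"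
    unfolding CT_def by blast
qed

lemma stable_not_deriv:
  assumes "stable n R G" "\<not> c1 R G" "(w, \<phi>) \<in># G"
  shows "\<not> deriv n {#} {#(w, \<phi>)#}"
proof
  let ?V = "\<lambda>p y. (y, NAtom p) \<in># G"
  assume "deriv n {#} {#(w, \<phi>)#}"
  then have "seq_valid (labels R G) (conn R) ?V {#} {#(w, \<phi>)#}"
    using deriv_valid equivp_conn stable_bounded_choices[OF assms(1)] by blast
  then have "seq_holds (labels R G) (conn R) ?V (\<lambda>_. w) {#(w, \<phi>)#}"
    by (rule seq_validD) (use label_in_labels[OF assms(3)] in \<open>auto simp: rels_hold_def\<close>)
  then have "sat (labels R G) (conn R) ?V w \<phi>"
    by (simp add: seq_holds_def)
  then show False
    using stable_sat_false[OF assms] by blast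
qed

theorem theorem5:
  fixes n :: nat and \<phi> :: fm and w :: label
  shows "(prove n {#} {#(w, \<phi>)#} True \<longrightarrow> deriv n {#} {#(w, \<phi>)#}) \<and>
         (prove n {#} {#(w, \<phi>)#} False \<longrightarrow> \<not> deriv n {#} {#(w, \<phi>)#})"
proof (intro conjI impI)
  assume "prove n {#} {#(w, \<phi>)#} True"
  then show "deriv n {#} {#(w, \<phi>)#}"
    using prove_True_deriv by blast
next
  assume "prove n {#} {#(w, \<phi>)#} False"
  then obtain R G where "stable n R G" "\<not> c1 R G" "(w, \<phi>) \<in># G"
    using prove_False_stable[of n "{#}" "{#(w, \<phi>)#}" False "(w, \<phi>)"] by auto
  then show "\<not> deriv n {#} {#(w, \<phi>)#}"
    by (rule stable_not_deriv)
qed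

end
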